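(* Let $\mathbf{G}$ be a linear operator on $\mathbb{R}^{n_1\times\cdots\times n_d}$ and consider the explicit $s$-step linear multistep method $\mathbf{u}^{k+s}+\sum_{j=0}^{s-1}a_j\mathbf{u}^{k+j}=\Delta t\sum_{j=0}^{s-1}b_j\mathbf{G}\mathbf{u}^{k+j}$, written as the one-step recurrence $\mathbf{v}^{k+1}=\mathbf{L}_{\Delta t}\mathbf{v}^{k}$ with $\mathbf{v}^{k+1}=(\mathbf{u}^{k+s},\mathbf{u}^{k+s-1},\dots,\mathbf{u}^{k+1})$ and $$\mathbf{L}_{\Delta t}=\begin{bmatrix} b_{s-1}\Delta t\mathbf{G}-a_{s-1}\mathbf{I} & \cdots & b_1\Delta t\mathbf{G}-a_1\mathbf{I} & b_0\Delta t\mathbf{G}-a_0\mathbf{I}\\ \mathbf{I}&\cdots&\mathbf{0}&\mathbf{0}\\ \vdots&\ddots&\vdots&\vdots\\ \mathbf{0}&\cdots&\mathbf{I}&\mathbf{0}\end{bmatrix}.$$ Suppose this linear scheme is Lax-stable, i.e. there is a constant $K$ with $\|\mathbf{L}_{\Delta t}\|_2\le 1+K\Delta t$. Then the rank-truncated scheme $\mathbf{v}^{k+1}=\mathfrak{T}_r(\mathbf{L}_{\Delta t}\mathbf{v}^{k})$ is stable: for every $T>0$ there is a constant $C_T$ (one may take $C_T=e^{KT}$) such that $\|\mathbf{v}^{k}\|_2\le C_T\|\mathbf{v}^{0}\|_2$ for all $k$ with $k\Delta t\le T$.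
   Context: $\|\cdot\|_2$ on tensors (and on block vectors of tensors) is the Euclidean norm of all entries, and $\|\mathbf{L}_{\Delta t}\|_2$ is the induced operator norm. $\mathfrak{T}_r$ is the hierarchical (HOSVD-based) rank-$r$ truncation operator with respect to a fixed dimension tree $\mathcal{T}_d$ and target ranks $r=(r_t)$, applied to each tensor block of the block vector. For a single tensor, $\mathfrak{T}_r(\mathbf{x})=\prod_{t\in\mathcal{T}_d^{p}}\mathbf{P}_t\cdots\prod_{t\in\mathcal{T}_d^{1}}\mathbf{P}_t\,\mathbf{x}$, where $\mathcal{T}_d^l$ is the set of tree nodes at distance $l$ from the root, $p$ is the tree depth, and each $\mathbf{P}_t$ (depending on $\mathbf{x}$) is the orthogonal projection acting on the $t$-mode matricization $\mathbf{x}^{(t)}$ (rows indexed by the modes in $t$) onto the span of its leading $r_t$ left singular vectors. *)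

theory Defs
  imports Complex_Main
begin

text \<open>Modes are 0..<d, mode k has size n k. A tensor is a real-valued
  function on multi-indices; only its values on the index set matter.\<close>

type_synonym midx = "nat \<Rightarrow> nat"
type_synonym tensor = "midx \<Rightarrow> real"

definition idx_set :: "nat \<Rightarrow> (nat \<Rightarrow> nat) \<Rightarrow> midx set" where
  "idx_set d n = {i. \<forall>k. (k < d \<longrightarrow> i k < n k) \<and> (d \<le> k \<longrightarrow> i k = 0)}"

text \<open>Block vectors of s tensors: v q is the q-th block (q < s).\<close>
type_synonym bvec = "nat \<Rightarrow> tensor"

definition bnorm :: "nat \<Rightarrow> (nat \<Rightarrow> nat) \<Rightarrow> nat \<Rightarrow> bvec \<Rightarrow> real" where
  "bnorm d n s v = sqrt (\<Sum>q<s. \<Sum>i\<in>idx_set d n. (v q i)^2)"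

text \<open>A general linear operator on the tensor space, given by its kernel g.\<close>
definition lin_app :: "nat \<Rightarrow> (nat \<Rightarrow> nat) \<Rightarrow> (midx \<Rightarrow> midx \<Rightarrow> real) \<Rightarrow> tensor \<Rightarrow> tensor" where
  "lin_app d n g x = (\<lambda>i. \<Sum>j\<in>idx_set d n. g i j * x j)"

text \<open>Block 0 is the new value, block q (q>=1) is block q-1 of the argument;
  column c of the first block row carries coefficient index s-1-c.\<close>
definition Lop :: "nat \<Rightarrow> (nat \<Rightarrow> nat) \<Rightarrow> (midx \<Rightarrow> midx \<Rightarrow> real) \<Rightarrow> nat \<Rightarrow>
    (nat \<Rightarrow> real) \<Rightarrow> (nat \<Rightarrow> real) \<Rightarrow> real \<Rightarrow> bvec \<Rightarrow> bvec" where
  "Lop d n g s a b dt v = (\<lambda>q. if q = 0 then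
       (\<lambda>i. \<Sum>c<s. b (s - 1 - c) * dt * lin_app d n g (v c) i - a (s - 1 - c) * v c i)
     else v (q - 1))"

definition op_norm :: "nat \<Rightarrow> (nat \<Rightarrow> nat) \<Rightarrow> nat \<Rightarrow> (bvec \<Rightarrow> bvec) \<Rightarrow> real" where
  "op_norm d n s L = Inf {c. 0 \<le> c \<and> (\<forall>v. bnorm d n s (L v) \<le> c * bnorm d n s v)}"

datatype dtree = Leaf nat | Node dtree dtree

fun leaves :: "dtree \<Rightarrow> nat list" where
  "leaves (Leaf k) = [k]"
| "leaves (Node l r) = leaves l @ leaves r"

definition modes :: "dtree \<Rightarrow> nat set" where
  "modes tr = set (leaves tr)"

definition dim_tree :: "nat \<Rightarrow> dtree \<Rightarrow> bool" where
  "dim_tree d tr \<longleftrightarrow> distinct (leaves tr) \<and> set (leaves tr) = {0..<d}"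

fun nodes_at :: "dtree \<Rightarrow> nat \<Rightarrow> nat set list" where
  "nodes_at tr 0 = [modes tr]"
| "nodes_at (Leaf k) (Suc l) = []"
| "nodes_at (Node a b) (Suc l) = nodes_at a l @ nodes_at b l"

fun depth :: "dtree \<Rightarrow> nat" where
  "depth (Leaf k) = 0"
| "depth (Node a b) = Suc (max (depth a) (depth b))"

definition restr :: "nat set \<Rightarrow> midx \<Rightarrow> midx" where
  "restr t i = (\<lambda>k. if k \<in> t then i k else 0)"

definition merge :: "nat set \<Rightarrow> midx \<Rightarrow> midx \<Rightarrow> midx" where
  "merge t a b = (\<lambda>k. if k \<in> t then a k else b k)"

definition rows :: "nat \<Rightarrow> (nat \<Rightarrow> nat) \<Rightarrow> nat set \<Rightarrow> midx set" where
  "rows d n t = restr t ` idx_set d n"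

definition cols :: "nat \<Rightarrow> (nat \<Rightarrow> nat) \<Rightarrow> nat set \<Rightarrow> midx set" where
  "cols d n t = restr (- t) ` idx_set d n"

definition matricize :: "nat set \<Rightarrow> tensor \<Rightarrow> midx \<Rightarrow> midx \<Rightarrow> real" where
  "matricize t x a b = x (merge t a b)"

definition orthonormal_on :: "'i set \<Rightarrow> nat \<Rightarrow> (nat \<Rightarrow> 'i \<Rightarrow> real) \<Rightarrow> bool" where
  "orthonormal_on R p u \<longleftrightarrow>
     (\<forall>j<p. \<forall>j'<p. (\<Sum>a\<in>R. u j a * u j' a) = (if j = j' then 1 else 0))"

definition leading_proj :: "'i set \<Rightarrow> 'k set \<Rightarrow> ('i \<Rightarrow> 'k \<Rightarrow> real) \<Rightarrow> nat \<Rightarrow>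
    ('i \<Rightarrow> 'i \<Rightarrow> real) \<Rightarrow> bool" where
  "leading_proj R C M r P \<longleftrightarrow>
     (\<exists>sigma u w. let p = min (card R) (card C) in
        orthonormal_on R p u \<and> orthonormal_on C p w \<and>
        (\<forall>j<p. 0 \<le> sigma j) \<and> (\<forall>j j'. j \<le> j' \<longrightarrow> j' < p \<longrightarrow> sigma j' \<le> sigma j) \<and>
        (\<forall>a\<in>R. \<forall>b\<in>C. M a b = (\<Sum>j<p. sigma j * u j a * w j b)) \<and>
        (\<forall>a\<in>R. \<forall>a'\<in>R. P a a' = (\<Sum>j<min r p. u j a * u j a')))"

definition apply_proj :: "nat \<Rightarrow> (nat \<Rightarrow> nat) \<Rightarrow> nat set \<Rightarrow> (midx \<Rightarrow> midx \<Rightarrow> real) \<Rightarrow> tensor \<Rightarrow> tensor" where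
  "apply_proj d n t P z = (\<lambda>i. \<Sum>a'\<in>rows d n t. P (restr t i) a' * z (merge t a' i))"

text \<open>prod_{t in T^p} P_t ... prod_{t in T^1} P_t z : level 1 applied first.\<close>
definition apply_levels :: "nat \<Rightarrow> (nat \<Rightarrow> nat) \<Rightarrow> dtree \<Rightarrow> (nat set \<Rightarrow> midx \<Rightarrow> midx \<Rightarrow> real) \<Rightarrow> tensor \<Rightarrow> tensor" where
  "apply_levels d n tr P z =
     fold (\<lambda>t y. apply_proj d n t (P t) y) (concat (map (nodes_at tr) [1..<Suc (depth tr)])) z"

text \<open>y is a hierarchical rank-r truncation T_r(x) (any admissible choice of leading
  singular vectors, all projections computed from x). Equality is on the index set.\<close>
definition is_trunc :: "nat \<Rightarrow> (nat \<Rightarrow> nat) \<Rightarrow> dtree \<Rightarrow> (nat set \<Rightarrow> nat) \<Rightarrow> tensor \<Rightarrow> tensor \<Rightarrow> bool" where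
  "is_trunc d n tr r x y \<longleftrightarrow>
     (\<exists>P. (\<forall>l\<in>{1..depth tr}. \<forall>t\<in>set (nodes_at tr l).
            leading_proj (rows d n t) (cols d n t) (matricize t x) (r t) (P t)) \<and>
          (\<forall>i\<in>idx_set d n. y i = apply_levels d n tr P x i))"

end

theory Submission imports Defs "HOL-Library.FuncSet" begin

text \<open>Every hierarchical truncation is a composition of orthogonal projections, each acting
  on a matricization, so by Bessel's inequality it does not increase the Euclidean norm of a
  block, whatever the tree and the ranks. Hence one step of the truncated scheme grows the norm
  by at most the factor \<open>1 + K \<Delta>t\<close>, and
  \<open>(1 + K \<Delta>t)\<^sup>k \<le> exp (K k \<Delta>t) \<le> exp (K T)\<close>.\<close>

lemma orthonormal_on_sum_sq_comb:
  assumes "orthonormal_on R m u"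
  shows "(\<Sum>a\<in>R. (\<Sum>j<m. c j * u j a)\<^sup>2) = (\<Sum>j<m. (c j)\<^sup>2)"
proof -
  have "(\<Sum>a\<in>R. (\<Sum>j<m. c j * u j a)\<^sup>2) = (\<Sum>j<m. \<Sum>j'<m. c j * c j' * (\<Sum>a\<in>R. u j a * u j' a))"
    by (simp add: power2_eq_square sum_product sum_distrib_left mult_ac sum.swap[where A = R])
  also have "\<dots> = (\<Sum>j<m. \<Sum>j'<m. c j * c j' * (if j = j' then 1 else 0))"
    using assms by (intro sum.cong refl) (simp add: orthonormal_on_def)
  also have "\<dots> = (\<Sum>j<m. (c j)\<^sup>2)"
    by (simp add: power2_eq_square if_distrib sum.delta cong: if_cong)
  finally show ?thesis .
qed

lemma orthonormal_on_bessel: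
  assumes "finite R" and "orthonormal_on R m u"
  shows "(\<Sum>a\<in>R. (\<Sum>a'\<in>R. (\<Sum>j<m. u j a * u j a') * w a')\<^sup>2) \<le> (\<Sum>a\<in>R. (w a)\<^sup>2)"
proof -
  define coef where "coef j = (\<Sum>a'\<in>R. u j a' * w a')" for j
  define pw where "pw a = (\<Sum>j<m. coef j * u j a)" for a
  have pw_eq: "(\<Sum>a'\<in>R. (\<Sum>j<m. u j a * u j a') * w a') = pw a" for a
  proof -
    have "(\<Sum>a'\<in>R. (\<Sum>j<m. u j a * u j a') * w a') = (\<Sum>a'\<in>R. \<Sum>j<m. u j a * (u j a' * w a'))"
      by (simp add: sum_distrib_right mult.assoc)
    also have "\<dots> = (\<Sum>j<m. \<Sum>a'\<in>R. u j a * (u j a' * w a'))"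
      by (rule sum.swap)
    also have "\<dots> = pw a"
      by (simp add: pw_def coef_def sum_distrib_left[symmetric] mult.commute)
    finally show ?thesis .
  qed
  have norm_pw: "(\<Sum>a\<in>R. (pw a)\<^sup>2) = (\<Sum>j<m. (coef j)\<^sup>2)"
    unfolding pw_def by (rule orthonormal_on_sum_sq_comb[OF assms(2)])
  have inner_pw: "(\<Sum>a\<in>R. w a * pw a) = (\<Sum>j<m. (coef j)\<^sup>2)"
  proof -
    have "(\<Sum>a\<in>R. w a * pw a) = (\<Sum>a\<in>R. \<Sum>j<m. coef j * (u j a * w a))"
      by (simp add: pw_def sum_distrib_left mult_ac)
    also have "\<dots> = (\<Sum>j<m. \<Sum>a\<in>R. coef j * (u j a * w a))"
      by (rule sum.swap)
    also have "\<dots> = (\<Sum>j<m. (coef j)\<^sup>2)"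
      by (simp add: coef_def power2_eq_square sum_distrib_left[symmetric])
    finally show ?thesis .
  qed
  have "0 \<le> (\<Sum>a\<in>R. (w a - pw a)\<^sup>2)"
    by (simp add: sum_nonneg)
  also have "\<dots> = (\<Sum>a\<in>R. (w a)\<^sup>2) - 2 * (\<Sum>a\<in>R. w a * pw a) + (\<Sum>a\<in>R. (pw a)\<^sup>2)"
    by (simp add: power2_diff sum.distrib sum_subtractf sum_distrib_left mult.assoc)
  finally show ?thesis
    using norm_pw inner_pw by (simp add: pw_eq)
qed

lemma leading_proj_sum_sq_le:
  assumes "finite R" and "leading_proj R C M r P"
  shows "(\<Sum>a\<in>R. (\<Sum>a'\<in>R. P a a' * w a')\<^sup>2) \<le> (\<Sum>a\<in>R. (w a)\<^sup>2)"
proof -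
  obtain p u where "orthonormal_on R p u"
    and P: "\<forall>a\<in>R. \<forall>a'\<in>R. P a a' = (\<Sum>j<min r p. u j a * u j a')"
    using assms(2) unfolding leading_proj_def Let_def by fastforce
  then have "orthonormal_on R (min r p) u"
    by (auto simp: orthonormal_on_def)
  with assms(1) have "(\<Sum>a\<in>R. (\<Sum>a'\<in>R. (\<Sum>j<min r p. u j a * u j a') * w a')\<^sup>2) \<le> (\<Sum>a\<in>R. (w a)\<^sup>2)"
    by (rule orthonormal_on_bessel)
  with P show ?thesis
    by (simp cong: sum.cong)
qed

lemma finite_idx_set: "finite (idx_set d n)"
proof -
  let ?f = "\<lambda>i::midx. restrict i {0..<d}"
  have "?f ` idx_set d n \<subseteq> PiE {0..<d} (\<lambda>k. {..<n k})"
    by (auto simp: idx_set_def PiE_def)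
  then have "finite (?f ` idx_set d n)"
    by (rule finite_subset) (simp add: finite_PiE)
  moreover have "inj_on ?f (idx_set d n)"
  proof (rule inj_onI, rule ext)
    fix x y k
    assume "x \<in> idx_set d n" "y \<in> idx_set d n" and eq: "?f x = ?f y"
    show "x k = y k"
    proof (cases "k < d")
      case True
      then show ?thesis using fun_cong[OF eq, of k] by simp
    next
      case False
      with \<open>x \<in> idx_set d n\<close> \<open>y \<in> idx_set d n\<close> show ?thesis
        by (simp add: idx_set_def)
    qed
  qed
  ultimately show ?thesis
    by (rule finite_imageD)
qed

lemma restr_merge_rows: "a \<in> rows d n t \<Longrightarrow> restr t (merge t a c) = a"
  by (auto simp: rows_def merge_def restr_def)

lemma merge_merge: "merge t a' (merge t a c) = merge t a' c"
  by (auto simp: merge_def)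

lemma sum_idx_set_matricize:
  "(\<Sum>i\<in>idx_set d n. F i) = (\<Sum>c\<in>cols d n t. \<Sum>a\<in>rows d n t. F (merge t a c))"
proof -
  have "(\<Sum>c\<in>cols d n t. \<Sum>a\<in>rows d n t. F (merge t a c)) =
        (\<Sum>(c, a)\<in>cols d n t \<times> rows d n t. F (merge t a c))"
    by (simp add: sum.cartesian_product)
  also have "\<dots> = (\<Sum>i\<in>idx_set d n. F i)"
    by (rule sum.reindex_bij_witness[where j = "\<lambda>(c, a). merge t a c"
          and i = "\<lambda>i. (restr (- t) i, restr t i)"])
       (auto simp: rows_def cols_def idx_set_def merge_def restr_def)
  finally show ?thesis by simp
qed

lemma apply_proj_sum_sq_le:
  assumes "leading_proj (rows d n t) (cols d n t) M r P"
  shows "(\<Sum>i\<in>idx_set d n. (apply_proj d n t P z i)\<^sup>2) \<le> (\<Sum>i\<in>idx_set d n. (z i)\<^sup>2)"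
proof -
  have "finite (rows d n t)"
    using finite_idx_set by (simp add: rows_def)
  note proj_le = leading_proj_sum_sq_le[OF this assms]
  have "(\<Sum>i\<in>idx_set d n. (apply_proj d n t P z i)\<^sup>2) =
     (\<Sum>c\<in>cols d n t. \<Sum>a\<in>rows d n t. (\<Sum>a'\<in>rows d n t. P a a' * z (merge t a' c))\<^sup>2)"
    unfolding sum_idx_set_matricize[of _ d n t] apply_proj_def
    by (intro sum.cong refl) (simp add: restr_merge_rows merge_merge)
  also have "\<dots> \<le> (\<Sum>c\<in>cols d n t. \<Sum>a\<in>rows d n t. (z (merge t a c))\<^sup>2)"
    by (intro sum_mono proj_le)
  also have "\<dots> = (\<Sum>i\<in>idx_set d n. (z i)\<^sup>2)"
    by (rule sum_idx_set_matricize[symmetric])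
  finally show ?thesis .
qed

lemma fold_apply_proj_sum_sq_le:
  assumes "\<forall>t\<in>set ts. \<exists>M r. leading_proj (rows d n t) (cols d n t) M r (P t)"
  shows "(\<Sum>i\<in>idx_set d n. (fold (\<lambda>t. apply_proj d n t (P t)) ts z i)\<^sup>2) \<le> (\<Sum>i\<in>idx_set d n. (z i)\<^sup>2)"
  using assms
proof (induction ts arbitrary: z)
  case Nil
  then show ?case by simp
next
  case (Cons t ts)
  then have "(\<Sum>i\<in>idx_set d n. (apply_proj d n t (P t) z i)\<^sup>2) \<le> (\<Sum>i\<in>idx_set d n. (z i)\<^sup>2)"
    using apply_proj_sum_sq_le by auto
  with Cons.IH[of "apply_proj d n t (P t) z"] Cons.prems show ?case
    by simp
qed

lemma is_trunc_sum_sq_le: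
  assumes "is_trunc d n tr r x y"
  shows "(\<Sum>i\<in>idx_set d n. (y i)\<^sup>2) \<le> (\<Sum>i\<in>idx_set d n. (x i)\<^sup>2)"
proof -
  obtain P where P: "\<forall>l\<in>{1..depth tr}. \<forall>t\<in>set (nodes_at tr l).
            leading_proj (rows d n t) (cols d n t) (matricize t x) (r t) (P t)"
     and y: "\<forall>i\<in>idx_set d n. y i = apply_levels d n tr P x i"
    using assms unfolding is_trunc_def by blast
  have "(\<Sum>i\<in>idx_set d n. (y i)\<^sup>2) = (\<Sum>i\<in>idx_set d n. (apply_levels d n tr P x i)\<^sup>2)"
    using y by simp
  also have "\<dots> \<le> (\<Sum>i\<in>idx_set d n. (x i)\<^sup>2)"
    unfolding apply_levels_def
    by (rule fold_apply_proj_sum_sq_le) (use P in \<open>fastforce simp: atLeastLessThanSuc_atLeastAtMost\<close>)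
  finally show ?thesis .
qed

lemma bnorm_nonneg: "0 \<le> bnorm d n s w"
  by (simp add: bnorm_def sum_nonneg)

lemma bnorm_le_blockwise:
  assumes "\<And>q. q < s \<Longrightarrow> (\<Sum>i\<in>idx_set d n. (x q i)\<^sup>2) \<le> (\<Sum>i\<in>idx_set d n. (y q i)\<^sup>2)"
  shows "bnorm d n s x \<le> bnorm d n s y"
  unfolding bnorm_def using assms by (intro real_sqrt_le_mono sum_mono[where K = "{..<s}"]) simp

lemma abs_le_bnorm:
  assumes "q < s" and "i \<in> idx_set d n"
  shows "\<bar>w q i\<bar> \<le> bnorm d n s w"
proof -
  have "(w q i)\<^sup>2 \<le> (\<Sum>i\<in>idx_set d n. (w q i)\<^sup>2)"
    by (rule member_le_sum) (use assms finite_idx_set in auto)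
  also have "\<dots> \<le> (\<Sum>q<s. \<Sum>i\<in>idx_set d n. (w q i)\<^sup>2)"
    by (rule member_le_sum[where f = "\<lambda>q. \<Sum>i\<in>idx_set d n. (w q i)\<^sup>2"])
       (use assms in \<open>auto intro: sum_nonneg\<close>)
  finally show ?thesis
    unfolding bnorm_def using real_sqrt_le_mono by fastforce
qed

lemma abs_lin_app_le:
  assumes "\<And>j. j \<in> idx_set d n \<Longrightarrow> \<bar>x j\<bar> \<le> B"
  shows "\<bar>lin_app d n g x i\<bar> \<le> (\<Sum>j\<in>idx_set d n. \<bar>g i j\<bar>) * B"
proof -
  have "\<bar>lin_app d n g x i\<bar> \<le> (\<Sum>j\<in>idx_set d n. \<bar>g i j * x j\<bar>)"
    unfolding lin_app_def by (rule sum_abs)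
  also have "\<dots> \<le> (\<Sum>j\<in>idx_set d n. \<bar>g i j\<bar> * B)"
    by (intro sum_mono) (simp add: abs_mult mult_left_mono assms)
  finally show ?thesis
    by (simp add: sum_distrib_right)
qed

lemma abs_Lop_first_block_le:
  assumes "i \<in> idx_set d n"
  shows "\<bar>Lop d n g s a b dt w 0 i\<bar> \<le>
    (\<Sum>c<s. \<bar>b (s - 1 - c)\<bar> * \<bar>dt\<bar> * (\<Sum>j\<in>idx_set d n. \<bar>g i j\<bar>) + \<bar>a (s - 1 - c)\<bar>) * bnorm d n s w"
proof -
  let ?G = "\<Sum>j\<in>idx_set d n. \<bar>g i j\<bar>" and ?N = "bnorm d n s w"
  have term_le: "\<bar>b (s - 1 - c) * dt * lin_app d n g (w c) i - a (s - 1 - c) * w c i\<bar>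
     \<le> (\<bar>b (s - 1 - c)\<bar> * \<bar>dt\<bar> * ?G + \<bar>a (s - 1 - c)\<bar>) * ?N"
    if "c < s" for c
  proof -
    have "\<bar>b (s - 1 - c) * dt * lin_app d n g (w c) i - a (s - 1 - c) * w c i\<bar>
       \<le> \<bar>b (s - 1 - c)\<bar> * \<bar>dt\<bar> * \<bar>lin_app d n g (w c) i\<bar> + \<bar>a (s - 1 - c)\<bar> * \<bar>w c i\<bar>"
      using abs_triangle_ineq4[of "b (s - 1 - c) * dt * lin_app d n g (w c) i" "a (s - 1 - c) * w c i"]
      by (simp add: abs_mult)
    also have "\<dots> \<le> \<bar>b (s - 1 - c)\<bar> * \<bar>dt\<bar> * (?G * ?N) + \<bar>a (s - 1 - c)\<bar> * ?N"
      by (intro add_mono mult_left_mono abs_lin_app_le abs_le_bnorm that assms) auto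
    finally show ?thesis
      by (simp add: algebra_simps)
  qed
  have "\<bar>Lop d n g s a b dt w 0 i\<bar> \<le>
      (\<Sum>c<s. \<bar>b (s - 1 - c) * dt * lin_app d n g (w c) i - a (s - 1 - c) * w c i\<bar>)"
    unfolding Lop_def by (simp add: sum_abs)
  also have "\<dots> \<le> (\<Sum>c<s. (\<bar>b (s - 1 - c)\<bar> * \<bar>dt\<bar> * ?G + \<bar>a (s - 1 - c)\<bar>) * ?N)"
    by (intro sum_mono term_le) simp
  finally show ?thesis
    by (simp add: sum_distrib_right)
qed

lemma Lop_bounded: "\<exists>C\<ge>0. \<forall>w. bnorm d n s (Lop d n g s a b dt w) \<le> C * bnorm d n s w"
proof -
  let ?I = "idx_set d n" and ?L = "Lop d n g s a b dt"
  define A where "A i = (\<Sum>c<s. \<bar>b (s - 1 - c)\<bar> * \<bar>dt\<bar> * (\<Sum>j\<in>?I. \<bar>g i j\<bar>) + \<bar>a (s - 1 - c)\<bar>)" for i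
  define M where "M = (\<Sum>i\<in>?I. (A i)\<^sup>2)"
  have "bnorm d n s (?L w) \<le> sqrt (M + 1) * bnorm d n s w" for w
  proof -
    let ?N = "bnorm d n s w"
    have sq: "?N\<^sup>2 = (\<Sum>q<s. \<Sum>i\<in>?I. (w q i)\<^sup>2)"
      by (simp add: bnorm_def sum_nonneg)
    have first: "(\<Sum>i\<in>?I. (?L w 0 i)\<^sup>2) \<le> M * ?N\<^sup>2"
    proof -
      have "(\<Sum>i\<in>?I. (?L w 0 i)\<^sup>2) \<le> (\<Sum>i\<in>?I. (A i * ?N)\<^sup>2)"
        by (intro sum_mono power2_le_iff_abs_le[THEN iffD2] order.trans[OF abs_Lop_first_block_le])
           (auto simp: A_def bnorm_nonneg sum_nonneg)
      then show ?thesis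
        by (simp add: M_def power_mult_distrib sum_distrib_right)
    qed
    have shifted: "(\<Sum>q<s. \<Sum>i\<in>?I. (?L w q i)\<^sup>2) \<le> (\<Sum>i\<in>?I. (?L w 0 i)\<^sup>2) + ?N\<^sup>2"
    proof (cases s)
      case (Suc s')
      have "(\<Sum>q<s. \<Sum>i\<in>?I. (?L w q i)\<^sup>2) = (\<Sum>i\<in>?I. (?L w 0 i)\<^sup>2) + (\<Sum>q<s'. \<Sum>i\<in>?I. (w q i)\<^sup>2)"
        unfolding Suc sum.lessThan_Suc_shift by (simp add: Lop_def)
      also have "(\<Sum>q<s'. \<Sum>i\<in>?I. (w q i)\<^sup>2) \<le> (\<Sum>q<s. \<Sum>i\<in>?I. (w q i)\<^sup>2)"
        unfolding Suc by (simp add: sum_nonneg)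
      finally show ?thesis
        by (simp add: sq)
    qed (simp add: sum_nonneg)
    have "bnorm d n s (?L w) \<le> sqrt ((M + 1) * ?N\<^sup>2)"
      unfolding bnorm_def[of d n s "?L w"] using first shifted by (intro real_sqrt_le_mono) (simp add: algebra_simps)
    also have "\<dots> = sqrt (M + 1) * ?N"
      by (simp add: real_sqrt_mult bnorm_nonneg)
    finally show ?thesis .
  qed
  then show ?thesis
    by (intro exI[of _ "sqrt (M + 1)"]) (simp add: M_def sum_nonneg)
qed

text \<open>Boundedness is needed because \<^const>\<open>op_norm\<close> is an infimum, which carries no
  information for an unbounded operator (\<open>Inf {}\<close> is unspecified).\<close>
lemma bnorm_le_op_norm:
  assumes "\<exists>C\<ge>0. \<forall>w. bnorm d n s (L w) \<le> C * bnorm d n s w"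
  shows "bnorm d n s (L w) \<le> op_norm d n s L * bnorm d n s w"
proof (cases "bnorm d n s w = 0")
  case True
  with assms show ?thesis
    by (metis mult_zero_right)
next
  case False
  then have pos: "0 < bnorm d n s w"
    using bnorm_nonneg[of d n s w] by simp
  have "bnorm d n s (L w) / bnorm d n s w \<le> op_norm d n s L"
    unfolding op_norm_def using assms pos
    by (intro cInf_greatest) (auto simp: divide_le_eq)
  with pos show ?thesis
    by (simp add: divide_le_eq)
qed

lemma growth_le_exp:
  fixes x :: "nat \<Rightarrow> real"
  assumes "0 \<le> 1 + h" and "0 \<le> x 0" and "\<And>k. x (Suc k) \<le> (1 + h) * x k"
  shows "x k \<le> exp (h * k) * x 0"
proof -
  have "x k \<le> (1 + h) ^ k * x 0"
  proof (induction k)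
    case (Suc k)
    with assms(1) have "(1 + h) * x k \<le> (1 + h) ^ Suc k * x 0"
      by (simp add: mult_left_mono mult.assoc)
    with assms(3) show ?case
      by (rule order.trans)
  qed simp
  also have "\<dots> \<le> exp h ^ k * x 0"
    using assms(1,2) by (intro mult_right_mono power_mono) (auto simp: add.commute exp_ge_add_one_self)
  also have "\<dots> = exp (h * k) * x 0"
    by (simp add: exp_of_nat_mult[symmetric] mult.commute)
  finally show ?thesis .
qed

theorem theorem3p2:
  fixes d s :: nat and n :: "nat \<Rightarrow> nat" and tr :: dtree and r :: "nat set \<Rightarrow> nat"
    and g :: "midx \<Rightarrow> midx \<Rightarrow> real" and a b :: "nat \<Rightarrow> real" and dt K :: real
    and v :: "nat \<Rightarrow> bvec"
  assumes "dim_tree d tr"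
    and "1 \<le> s"
    and "0 < dt"
    and "0 \<le> K"
    and "op_norm d n s (Lop d n g s a b dt) \<le> 1 + K * dt"
    and "\<And>k q. q < s \<Longrightarrow> is_trunc d n tr r (Lop d n g s a b dt (v k) q) (v (Suc k) q)"
  shows "\<forall>T>0. \<forall>k. real k * dt \<le> T \<longrightarrow>
           bnorm d n s (v k) \<le> exp (K * T) * bnorm d n s (v 0)"
proof (intro allI impI)
  fix T :: real and k
  assume "0 < T" and kT: "real k * dt \<le> T"
  let ?L = "Lop d n g s a b dt"
  have step: "bnorm d n s (v (Suc j)) \<le> (1 + K * dt) * bnorm d n s (v j)" for j
  proof -
    have "bnorm d n s (v (Suc j)) \<le> bnorm d n s (?L (v j))"
      by (rule bnorm_le_blockwise, rule is_trunc_sum_sq_le, rule assms(6))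
    also have "\<dots> \<le> op_norm d n s ?L * bnorm d n s (v j)"
      by (intro bnorm_le_op_norm Lop_bounded)
    also have "\<dots> \<le> (1 + K * dt) * bnorm d n s (v j)"
      by (intro mult_right_mono assms(5) bnorm_nonneg)
    finally show ?thesis .
  qed
  have "bnorm d n s (v k) \<le> exp (K * dt * k) * bnorm d n s (v 0)"
    using assms(3,4) by (intro growth_le_exp step bnorm_nonneg) simp
  also have "\<dots> \<le> exp (K * T) * bnorm d n s (v 0)"
    using kT assms(4) by (intro mult_right_mono bnorm_nonneg) (simp add: mult_left_mono mult.commute mult.left_commute)
  finally show "bnorm d n s (v k) \<le> exp (K * T) * bnorm d n s (v 0)" .
qed

end
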